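(* Let $(M,d)$ be a metric space and let $F: M \to M$ be nonexpansive with respect to $d$. Let $u \in M$ be a fixed point of $F$ and let $(x^m)_{m\in\mathbb{N}}$ be a sequence in $M$ converging to $u$. Suppose there are constants $\eta, \theta \in (0,1)$, $c > 0$ and $R>0$ such that $$d(F^k(y), u) \le c\,\eta^k \quad\text{for all } y \text{ with } d(y,u)\le R \text{ and all } k\in\mathbb{N},$$ and $$d(F(x^m), x^{m+1}) \le c\,\theta^m \quad \text{for all } m \in \mathbb{N}.$$ Then $$\limsup_{k\to\infty} d(x^k, u)^{1/k} \le \eta^{\lambda} = \theta^{1-\lambda} < 1, \qquad \text{where } \lambda = \frac{\log\theta}{\log\eta + \log\theta}.$$
   Context: $F$ is nonexpansive with respect to $d$ if $d(F(x), F(y)) \le d(x,y)$ for all $x, y \in M$. *)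

theory Defs
  imports "HOL-Analysis.Analysis"
begin

definition nonexpansive :: "('a::metric_space \<Rightarrow> 'a) \<Rightarrow> bool" where
  "nonexpansive F \<longleftrightarrow> (\<forall>x y. dist (F x) (F y) \<le> dist x y)"

end

theory Submission
  imports Defs
begin

text \<open>
  Starting from x n, the sequence stays within O(\<theta>^n) of the exact orbit F^k (x n), since
  nonexpansiveness keeps each later perturbation from growing; the exact orbit approaches u
  like \<eta>^k once x n lies in the ball of radius R. Hence d(x (n + k), u) \<le> c \<eta>^k + C \<theta>^n,
  and splitting m = n + k with n \<approx> (1 - \<lambda>) m, k \<approx> \<lambda> m makes both terms of
  order (\<eta> powr \<lambda>)^m = (\<theta> powr (1 - \<lambda>))^m.
\<close>

lemma dist_perturbed_orbit_le:
  fixes F :: "'a::metric_space \<Rightarrow> 'a" and x :: "nat \<Rightarrow> 'a" and c \<theta> :: real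
  assumes ne: "nonexpansive F"
    and step: "\<And>m. dist (F (x m)) (x (Suc m)) \<le> c * \<theta> ^ m"
  shows "dist (x (n + k)) ((F ^^ k) (x n)) \<le> (\<Sum>i<k. c * \<theta> ^ (n + i))"
proof (induction k)
  case 0
  then show ?case by simp
next
  case (Suc k)
  have "dist (x (n + Suc k)) ((F ^^ Suc k) (x n))
      \<le> dist (x (Suc (n + k))) (F (x (n + k))) + dist (F (x (n + k))) (F ((F ^^ k) (x n)))"
    by (simp add: dist_triangle)
  also have "\<dots> \<le> c * \<theta> ^ (n + k) + dist (x (n + k)) ((F ^^ k) (x n))"
    using step[of "n + k"] ne by (intro add_mono) (auto simp: dist_commute nonexpansive_def)
  also have "\<dots> \<le> c * \<theta> ^ (n + k) + (\<Sum>i<k. c * \<theta> ^ (n + i))"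
    using Suc by simp
  finally show ?case by simp
qed

lemma sum_geometric_tail_le:
  fixes c \<theta> :: real
  assumes "0 \<le> c" "0 \<le> \<theta>" "\<theta> < 1"
  shows "(\<Sum>i<k. c * \<theta> ^ (n + i)) \<le> c / (1 - \<theta>) * \<theta> ^ n"
proof -
  have "(\<Sum>i<k. c * \<theta> ^ (n + i)) = c * \<theta> ^ n * (\<Sum>i<k. \<theta> ^ i)"
    by (simp add: sum_distrib_left power_add mult.assoc)
  also have "(\<Sum>i<k. \<theta> ^ i) = (1 - \<theta> ^ k) / (1 - \<theta>)"
    using assms by (simp add: sum_gp_strict)
  also have "\<dots> \<le> 1 / (1 - \<theta>)"
    using assms by (simp add: divide_right_mono)
  finally show ?thesis using assms by (simp add: mult_left_mono)
qed

lemma balancing_exponent: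
  fixes \<eta> \<theta> :: real
  assumes "0 < \<eta>" "\<eta> < 1" "0 < \<theta>" "\<theta> < 1"
  defines "lam \<equiv> ln \<theta> / (ln \<eta> + ln \<theta>)"
  shows "0 < lam" "lam < 1" "\<eta> powr lam = \<theta> powr (1 - lam)" "\<theta> powr (1 - lam) < 1"
proof -
  have ln_neg: "ln \<eta> < 0" "ln \<theta> < 0" using assms by auto
  show "0 < lam" using ln_neg unfolding lam_def by (simp add: divide_neg_neg)
  show lam1: "lam < 1" using ln_neg unfolding lam_def by (simp add: divide_simps)
  have "lam * ln \<eta> = (1 - lam) * ln \<theta>" using ln_neg unfolding lam_def by (simp add: field_simps)
  then show "\<eta> powr lam = \<theta> powr (1 - lam)" using assms by (simp add: powr_def)
  have "(1 - lam) * ln \<theta> < 0" using lam1 ln_neg by (simp add: mult_pos_neg)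
  then show "\<theta> powr (1 - lam) < 1" using assms by (simp add: powr_def)
qed

text \<open>The split m = n + k with n = \<lceil>(1 - \<lambda>) m\<rceil> has n \<ge> N0 once m \<ge> N0 / (1 - \<lambda>),
  and loses at most one factor \<eta> in the \<eta>-term through the rounding.\<close>

lemma balanced_geometric_bound:
  fixes d :: "nat \<Rightarrow> real" and \<eta> \<theta> A B :: real
  assumes "0 < \<eta>" "\<eta> < 1" "0 < \<theta>" "\<theta> < 1" "0 \<le> A" "0 \<le> B"
    and split_bound: "\<And>n k. N0 \<le> n \<Longrightarrow> d (n + k) \<le> A * \<eta> ^ k + B * \<theta> ^ n"
  defines "lam \<equiv> ln \<theta> / (ln \<eta> + ln \<theta>)"
  shows "eventually (\<lambda>m. d m \<le> (A / \<eta> + B) * (\<eta> powr lam) ^ m) sequentially"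
proof -
  note lam = balancing_exponent[OF assms(1-4), folded lam_def]
  define r where "r = \<eta> powr lam"
  have r0: "r > 0" using assms unfolding r_def by simp
  have "d m \<le> (A / \<eta> + B) * r ^ m" if m_large: "real N0 / (1 - lam) \<le> real m" for m
  proof -
    define n where "n = nat \<lceil>(1 - lam) * m\<rceil>"
    have n_real: "real n = of_int \<lceil>(1 - lam) * m\<rceil>"
      using lam(2) unfolding n_def by simp
    have n_lower: "(1 - lam) * m \<le> real n" and n_upper: "real n < (1 - lam) * m + 1"
      unfolding n_real by (rule le_of_int_ceiling, linarith)
    have "(1 - lam) * m \<le> real m" using lam(1,2) by (intro mult_left_le_one_le) auto
    then have "real n < real (Suc m)" using n_upper by simp
    then have "n \<le> m" by (simp only: of_nat_less_iff less_Suc_eq_le)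
    have "real N0 \<le> (1 - lam) * m" using m_large lam(2) by (simp add: pos_divide_le_eq mult.commute)
    then have "N0 \<le> n" using n_lower by (simp only: of_nat_le_iff[symmetric])
    define k where "k = m - n"
    have m_eq: "m = n + k" using \<open>n \<le> m\<close> unfolding k_def by simp
    have "real k = real m - real n" using \<open>n \<le> m\<close> unfolding k_def by (simp add: of_nat_diff)
    then have k_lower: "lam * m - 1 \<le> real k" using n_upper by (simp add: algebra_simps)
    have "\<eta> ^ k = \<eta> powr real k" using assms by (simp add: powr_realpow)
    also have "\<dots> \<le> \<eta> powr (lam * m - 1)" using assms k_lower by (simp add: powr_mono')
    also have "\<dots> = r ^ m / \<eta>" using assms r0 unfolding r_def
      by (simp add: powr_diff powr_powr powr_realpow[symmetric] mult.commute)
    finally have eta_pow: "\<eta> ^ k \<le> r ^ m / \<eta>" .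
    have "\<theta> ^ n = \<theta> powr real n" using assms by (simp add: powr_realpow)
    also have "\<dots> \<le> \<theta> powr ((1 - lam) * m)" using assms n_lower by (simp add: powr_mono')
    also have "\<dots> = r ^ m" using assms r0 unfolding r_def lam(3)
      by (simp add: powr_powr powr_realpow[symmetric] mult.commute)
    finally have theta_pow: "\<theta> ^ n \<le> r ^ m" .
    have "d m \<le> A * \<eta> ^ k + B * \<theta> ^ n" using split_bound[OF \<open>N0 \<le> n\<close>] m_eq by simp
    also have "\<dots> \<le> A * (r ^ m / \<eta>) + B * r ^ m"
      using eta_pow theta_pow assms by (intro add_mono mult_left_mono) auto
    finally show ?thesis by (simp add: field_simps)
  qed
  moreover have "eventually (\<lambda>m. real N0 / (1 - lam) \<le> real m) sequentially"
    by (rule eventually_sequentiallyI[of "nat \<lceil>real N0 / (1 - lam)\<rceil>"]) linarith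
  ultimately show ?thesis unfolding r_def by (auto elim: eventually_mono)
qed

lemma limsup_root_le_of_geometric_bound:
  fixes a :: "nat \<Rightarrow> real" and K r :: real
  assumes "\<And>m. 0 \<le> a m" "0 < K" "0 < r"
    and "eventually (\<lambda>m. a m \<le> K * r ^ m) sequentially"
  shows "limsup (\<lambda>m. ereal (a m powr (1 / real m))) \<le> ereal r"
proof -
  have "eventually (\<lambda>m. ereal (a m powr (1 / real m)) \<le> ereal (K powr (1 / real m) * r)) sequentially"
    using assms(4) eventually_gt_at_top[of 0]
  proof eventually_elim
    case (elim m)
    have "a m powr (1 / real m) \<le> (K * r ^ m) powr (1 / real m)"
      using elim assms(1) by (simp add: powr_mono2)
    also have "\<dots> = K powr (1 / real m) * r"
      using assms elim by (simp add: powr_mult powr_realpow[symmetric] powr_powr)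
    finally show ?case by simp
  qed
  then have "limsup (\<lambda>m. ereal (a m powr (1 / real m)))
      \<le> limsup (\<lambda>m. ereal (K powr (1 / real m) * r))"
    by (rule Limsup_mono)
  also have "\<dots> = ereal r"
  proof (rule lim_imp_Limsup[OF trivial_limit_sequentially])
    have "(\<lambda>m. K powr (1 / real m) * r) \<longlonglongrightarrow> K powr 0 * r"
      using assms(2) by (intro tendsto_intros lim_1_over_n) auto
    then show "(\<lambda>m. ereal (K powr (1 / real m) * r)) \<longlonglongrightarrow> ereal r"
      using assms(2) by (simp add: tendsto_ereal)
  qed
  finally show ?thesis .
qed

theorem mainTheorem12:
  fixes F :: "'a::metric_space \<Rightarrow> 'a" and u :: 'a and x :: "nat \<Rightarrow> 'a"
    and \<eta> \<theta> c R :: real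
  assumes "nonexpansive F"
    and "F u = u"
    and "x \<longlonglongrightarrow> u"
    and "0 < \<eta>" "\<eta> < 1" "0 < \<theta>" "\<theta> < 1" "c > 0" "R > 0"
    and "\<And>y k. dist y u \<le> R \<Longrightarrow> dist ((F ^^ k) y) u \<le> c * \<eta> ^ k"
    and "\<And>m. dist (F (x m)) (x (Suc m)) \<le> c * \<theta> ^ m"
  shows "let lam = ln \<theta> / (ln \<eta> + ln \<theta>) in
           limsup (\<lambda>k. ereal (dist (x k) u powr (1 / real k))) \<le> ereal (\<eta> powr lam)
         \<and> \<eta> powr lam = \<theta> powr (1 - lam)
         \<and> \<theta> powr (1 - lam) < 1"
proof -
  obtain N0 where near_u: "\<And>n. N0 \<le> n \<Longrightarrow> dist (x n) u \<le> R"
    using assms(3,9) unfolding LIMSEQ_def by (meson less_imp_le)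
  have "dist (x (n + k)) u \<le> c * \<eta> ^ k + c / (1 - \<theta>) * \<theta> ^ n" if "N0 \<le> n" for n k
    using dist_triangle[of "x (n + k)" u "(F ^^ k) (x n)"]
      dist_perturbed_orbit_le[OF assms(1,11), of n k]
      sum_geometric_tail_le[of c \<theta> n k] assms(10)[OF near_u[OF that], of k] assms(6-8)
    by linarith
  then have "eventually (\<lambda>m. dist (x m) u
      \<le> (c / \<eta> + c / (1 - \<theta>)) * (\<eta> powr (ln \<theta> / (ln \<eta> + ln \<theta>))) ^ m) sequentially"
    using assms(4-8) by (intro balanced_geometric_bound) auto
  then have "limsup (\<lambda>k. ereal (dist (x k) u powr (1 / real k)))
      \<le> ereal (\<eta> powr (ln \<theta> / (ln \<eta> + ln \<theta>)))"
    using assms(4-8) by (intro limsup_root_le_of_geometric_bound) (auto intro: add_pos_pos)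
  then show ?thesis
    using balancing_exponent[OF assms(4-7)] by (simp add: Let_def)
qed

end
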